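(* For every integer $m\geq 2$ and every integer $n\geq 3$, the graph $mF_n$ (the disjoint union of $m$ copies of the fan $F_n$) is $C_3$-supermagic.
   Context: All graphs are finite and simple. For a graph $H$, a graph $G=(V,E)$ has an $H$-covering if every edge of $G$ belongs to a subgraph of $G$ isomorphic to $H$. For such $G$, an $H$-magic labeling is a bijection $\lambda: V\cup E\to\{1,2,\dots,|V|+|E|\}$ for which there is a constant $c$ such that for every subgraph $H'=(V',E')$ of $G$ isomorphic to $H$, $\sum_{v\in V'}\lambda(v)+\sum_{e\in E'}\lambda(e)=c$. It is $H$-supermagic if moreover $\{\lambda(v):v\in V\}=\{1,\dots,|V|\}$; $G$ is $H$-supermagic if it admits such a labeling. $C_k$ is the cycle of length $k$. $mG$ denotes the disjoint union of $m$ copies of $G$. For $n\geq 3$, the fan $F_n=K_1+P_n$ has vertices $c,v_1,\dots,v_n$ and edges $cv_i$ ($1\le i\le n$) and $v_iv_{i+1}$ ($1\le i\le n-1$). *)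

theory Defs
  imports Main
begin

text \<open>A graph is a pair (V, E) of a vertex set and a set of edges, each edge being a
  2-element subset of V.\<close>
type_synonym 'a graph = "'a set \<times> 'a set set"

definition simple_graph :: "'a graph \<Rightarrow> bool" where
  "simple_graph G \<longleftrightarrow> finite (fst G) \<and>
     (\<forall>e\<in>snd G. \<exists>u v. u \<in> fst G \<and> v \<in> fst G \<and> u \<noteq> v \<and> e = {u, v})"

definition is_subgraph :: "'a graph \<Rightarrow> 'a graph \<Rightarrow> bool" where
  "is_subgraph G' G \<longleftrightarrow> fst G' \<subseteq> fst G \<and> snd G' \<subseteq> snd G \<and> (\<forall>e\<in>snd G'. e \<subseteq> fst G')"

definition graph_iso :: "'b graph \<Rightarrow> 'a graph \<Rightarrow> bool" where
  "graph_iso H G \<longleftrightarrow> (\<exists>f. bij_betw f (fst H) (fst G) \<and>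
     (\<forall>u\<in>fst H. \<forall>v\<in>fst H. {u, v} \<in> snd H \<longleftrightarrow> {f u, f v} \<in> snd G))"

definition H_subgraphs :: "'a graph \<Rightarrow> 'b graph \<Rightarrow> 'a graph set" where
  "H_subgraphs G H = {G'. is_subgraph G' G \<and> graph_iso H G'}"

definition H_covering :: "'a graph \<Rightarrow> 'b graph \<Rightarrow> bool" where
  "H_covering G H \<longleftrightarrow> (\<forall>e\<in>snd G. \<exists>G'\<in>H_subgraphs G H. e \<in> snd G')"

text \<open>A total labeling of V \<union> E, with vertices as Inl and edges as Inr.\<close>
definition H_magic_labeling :: "'a graph \<Rightarrow> 'b graph \<Rightarrow> ('a + 'a set \<Rightarrow> nat) \<Rightarrow> bool" where
  "H_magic_labeling G H lam \<longleftrightarrow>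
     bij_betw lam (Inl ` fst G \<union> Inr ` snd G) {1..card (fst G) + card (snd G)} \<and>
     (\<exists>c. \<forall>G'\<in>H_subgraphs G H.
        (\<Sum>v\<in>fst G'. lam (Inl v)) + (\<Sum>e\<in>snd G'. lam (Inr e)) = c)"

definition H_supermagic_labeling :: "'a graph \<Rightarrow> 'b graph \<Rightarrow> ('a + 'a set \<Rightarrow> nat) \<Rightarrow> bool" where
  "H_supermagic_labeling G H lam \<longleftrightarrow>
     H_magic_labeling G H lam \<and> (\<lambda>v. lam (Inl v)) ` fst G = {1..card (fst G)}"

definition H_supermagic :: "'a graph \<Rightarrow> 'b graph \<Rightarrow> bool" where
  "H_supermagic G H \<longleftrightarrow> H_covering G H \<and> (\<exists>lam. H_supermagic_labeling G H lam)"

definition cycle_graph :: "nat \<Rightarrow> nat graph" where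
  "cycle_graph k = ({0..<k}, {{i, (i + 1) mod k} | i. i < k})"

text \<open>The fan F_n = K_1 + P_n: centre 0, path vertices 1..n.\<close>
definition fan :: "nat \<Rightarrow> nat graph" where
  "fan n = ({0..n}, {{0, i} | i. 1 \<le> i \<and> i \<le> n} \<union> {{i, i + 1} | i. 1 \<le> i \<and> i \<le> n - 1})"

definition copies :: "nat \<Rightarrow> 'a graph \<Rightarrow> (nat \<times> 'a) graph" where
  "copies m G = ({(i, v). i < m \<and> v \<in> fst G},
                 (\<Union>i<m. (\<lambda>e. Pair i ` e) ` snd G))"

end

theory Submission
  imports Defs
begin

text \<open>
  Every edge of mF_n lies on a triangle, and the triangles are exactly the sets {c, v_i, v_(i+1)}
  inside a single copy. Number the elements of one fan by the slots 0, ..., 3n - 1: vertex v_i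
  gets slot i (the centre slot 0), the spoke c v_i slot 3n + 1 - 2i and the rim edge v_i v_(i+1)
  slot n + 2i, so the six slots of every triangle sum to 7n + 1. Element x of copy j is labelled
  m * slot(x) + r + 1 with r = j for vertices and r = m - 1 - j for edges. This is a bijection
  onto {1, ..., 3mn} that maps the vertices onto {1, ..., m(n + 1)}, and the copy index cancels
  in each triangle, which therefore has weight m(7n + 4) + 3.
\<close>

section \<open>Triangles as C3-subgraphs\<close>

lemma cycle_graph_3:
  "fst (cycle_graph 3) = {0, 1, 2}" "snd (cycle_graph 3) = {{0, 1}, {1, 2}, {2, 0}}"
proof -
  have three: "{..<3::nat} = {0, 1, 2}" by (auto simp: lessThan_nat_numeral)
  then show "fst (cycle_graph 3) = {0, 1, 2}" by (simp add: cycle_graph_def atLeast0LessThan)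
  have "{{i, (i + 1) mod 3} | i. i < (3::nat)} = (\<lambda>i. {i, (i + 1) mod 3}) ` {..<3}"
    by blast
  then show "snd (cycle_graph 3) = {{0, 1}, {1, 2}, {2, 0}}"
    unfolding three by (simp add: cycle_graph_def numeral_2_eq_2)
qed

definition triangle :: "'a \<Rightarrow> 'a \<Rightarrow> 'a \<Rightarrow> 'a graph" where
  "triangle a b c = ({a, b, c}, {{a, b}, {b, c}, {a, c}})"

lemma snd_triangle:
  assumes "a \<noteq> b" "b \<noteq> c" "a \<noteq> c"
  shows "snd (triangle a b c) = {{u, v} | u v. u \<in> {a, b, c} \<and> v \<in> {a, b, c} \<and> u \<noteq> v}"
  using assms unfolding triangle_def by auto

lemma triangle_eqI:
  assumes "a \<noteq> b" "b \<noteq> c" "a \<noteq> c" "x \<noteq> y" "y \<noteq> z" "x \<noteq> z"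
    and "{a, b, c} = {x, y, z}"
  shows "triangle a b c = triangle x y z"
  using snd_triangle[of a b c] snd_triangle[of x y z] assms
  by (simp add: prod_eq_iff triangle_def)

lemma simple_graph_edge_subset:
  "simple_graph G \<Longrightarrow> e \<in> snd G \<Longrightarrow> e \<subseteq> fst G"
  unfolding simple_graph_def by auto

lemma triangle_in_H_subgraphs_cycle3:
  assumes "simple_graph G" "a \<noteq> b" "b \<noteq> c" "a \<noteq> c"
    and "{a, b} \<in> snd G" "{b, c} \<in> snd G" "{a, c} \<in> snd G"
  shows "triangle a b c \<in> H_subgraphs G (cycle_graph 3)"
proof -
  have "{a, b} \<subseteq> fst G" "{b, c} \<subseteq> fst G"
    using simple_graph_edge_subset[OF assms(1)] assms(5,6) by blast+
  then have "is_subgraph (triangle a b c) G"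
    using assms(5-7) by (simp add: is_subgraph_def triangle_def)
  moreover
  define f where "f k = (if k = 0 then a else if k = 1 then b else c)" for k :: nat
  have "bij_betw f {0, 1, 2} {a, b, c}"
    using assms(2-4) by (auto simp: bij_betw_def inj_on_def f_def)
  moreover have "\<forall>u\<in>{0::nat, 1, 2}. \<forall>v\<in>{0, 1, 2}.
      {u, v} \<in> {{0, 1}, {1, 2}, {2, 0}} \<longleftrightarrow> {f u, f v} \<in> {{a, b}, {b, c}, {a, c}}"
    using assms(2-4) by (auto simp: f_def doubleton_eq_iff)
  ultimately show ?thesis
    unfolding H_subgraphs_def graph_iso_def cycle_graph_3 mem_Collect_eq
    by (auto simp only: triangle_def fst_conv snd_conv)
qed

lemma H_subgraphs_cycle3_triangle:
  assumes "simple_graph G" "G' \<in> H_subgraphs G (cycle_graph 3)"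
  obtains a b c where "a \<noteq> b" "b \<noteq> c" "a \<noteq> c"
    "{a, b} \<in> snd G" "{b, c} \<in> snd G" "{a, c} \<in> snd G" "G' = triangle a b c"
proof -
  have sub: "is_subgraph G' G" and "graph_iso (cycle_graph 3) G'"
    using assms(2) by (simp_all add: H_subgraphs_def)
  then obtain f where bij: "bij_betw f {0::nat, 1, 2} (fst G')"
    and iso: "\<forall>u\<in>{0::nat, 1, 2}. \<forall>v\<in>{0, 1, 2}.
      {u, v} \<in> {{0, 1}, {1, 2}, {2, 0}} \<longleftrightarrow> {f u, f v} \<in> snd G'"
    unfolding graph_iso_def cycle_graph_3 by blast
  have V: "fst G' = {f 0, f 1, f 2}"
    using bij by (simp add: bij_betw_def)
  have distinct: "f 0 \<noteq> f 1" "f 1 \<noteq> f 2" "f 0 \<noteq> f 2"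
    using bij by (auto simp: bij_betw_def inj_on_def)
  have E': "{f 0, f 1} \<in> snd G'" "{f 1, f 2} \<in> snd G'" "{f 0, f 2} \<in> snd G'"
    using iso by (auto simp: insert_commute)
  have E'_E: "snd G' \<subseteq> snd G" and "\<forall>e\<in>snd G'. e \<subseteq> fst G'"
    using sub by (simp_all add: is_subgraph_def)
  then have E'_sub: "snd G' \<subseteq> {{f 0, f 1}, {f 1, f 2}, {f 0, f 2}}"
    using assms(1) unfolding simple_graph_def V by (fastforce simp: insert_commute)
  have "G' = triangle (f 0) (f 1) (f 2)"
    using V E' E'_sub by (auto simp: triangle_def prod_eq_iff)
  then show thesis
    using that distinct E' E'_E by blast
qed

section \<open>Disjoint copies and the fan\<close>

lemma fst_copies: "fst (copies m G) = {..<m} \<times> fst G"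
  by (auto simp: copies_def)

lemma copies_edge_iff:
  "{(j, u), (j', v)} \<in> snd (copies m G) \<longleftrightarrow> j' = j \<and> j < m \<and> {u, v} \<in> snd G"
proof
  assume "{(j, u), (j', v)} \<in> snd (copies m G)"
  then obtain k e where "k < m" "e \<in> snd G" and eq: "{(j, u), (j', v)} = Pair k ` e"
    by (auto simp: copies_def)
  moreover from eq have "j = k" "j' = k" by (auto simp: set_eq_iff)
  moreover have "e = {u, v}"
    using arg_cong[OF eq, of "image snd"] by (simp add: image_image)
  ultimately show "j' = j \<and> j < m \<and> {u, v} \<in> snd G" by simp
next
  assume "j' = j \<and> j < m \<and> {u, v} \<in> snd G"
  then have "{(j, u), (j', v)} = Pair j ` {u, v}" "j < m" "{u, v} \<in> snd G"
    by auto
  then show "{(j, u), (j', v)} \<in> snd (copies m G)"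
    unfolding copies_def snd_conv by blast
qed

lemma simple_graph_copies:
  assumes "simple_graph G"
  shows "simple_graph (copies m G)"
  unfolding simple_graph_def
proof (intro conjI ballI)
  show "finite (fst (copies m G))"
    using assms by (simp add: fst_copies simple_graph_def)
  fix e assume "e \<in> snd (copies m G)"
  then obtain j e0 where "j < m" "e0 \<in> snd G" "e = Pair j ` e0"
    by (auto simp: copies_def)
  moreover obtain u v where "u \<in> fst G" "v \<in> fst G" "u \<noteq> v" "e0 = {u, v}"
    using assms \<open>e0 \<in> snd G\<close> unfolding simple_graph_def by blast
  ultimately show "\<exists>x y. x \<in> fst (copies m G) \<and> y \<in> fst (copies m G) \<and> x \<noteq> y \<and> e = {x, y}"
    by (intro exI[of _ "(j, u)"] exI[of _ "(j, v)"]) (simp add: fst_copies)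
qed

lemma snd_fan: "snd (fan n) = {{0, i} | i. 1 \<le> i \<and> i \<le> n} \<union> {{i, i + 1} | i. 1 \<le> i \<and> i < n}"
proof -
  have "{{i, i + 1} | i. 1 \<le> i \<and> i \<le> n - 1} = {{i, i + 1} | i. 1 \<le> i \<and> i < n}"
    by (intro Collect_cong ex_cong1) auto
  then show ?thesis by (simp add: fan_def)
qed

lemma fan_edge_iff:
  "{u, v} \<in> snd (fan n) \<longleftrightarrow>
     (u = 0 \<and> 1 \<le> v \<and> v \<le> n) \<or> (v = 0 \<and> 1 \<le> u \<and> u \<le> n) \<or>
     (1 \<le> u \<and> v = u + 1 \<and> v \<le> n) \<or> (1 \<le> v \<and> u = v + 1 \<and> u \<le> n)"
  unfolding snd_fan Un_iff mem_Collect_eq doubleton_eq_iff by auto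

lemma simple_graph_fan: "simple_graph (fan n)"
  unfolding simple_graph_def
proof (intro conjI ballI)
  show "finite (fst (fan n))" by (simp add: fan_def)
  fix e assume "e \<in> snd (fan n)"
  then consider i where "1 \<le> i" "i \<le> n" "e = {0, i}" | i where "1 \<le> i" "i < n" "e = {i, i + 1}"
    unfolding snd_fan by blast
  then show "\<exists>u v. u \<in> fst (fan n) \<and> v \<in> fst (fan n) \<and> u \<noteq> v \<and> e = {u, v}"
  proof cases
    case (1 i) then show ?thesis by (intro exI[of _ 0] exI[of _ i]) (simp add: fan_def)
  next
    case (2 i) then show ?thesis by (intro exI[of _ i] exI[of _ "i + 1"]) (simp add: fan_def)
  qed
qed

lemma fan_rim_edge:
  assumes "{v, w} \<in> snd (fan n)" "v \<noteq> 0" "w \<noteq> 0"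
  obtains i where "1 \<le> i" "i < n" "{v, w} = {i, i + 1}"
  using assms unfolding fan_edge_iff by (metis Suc_eq_plus1 Suc_le_eq insert_commute)

lemma fan_triangle:
  assumes uv: "{u, v} \<in> snd (fan n)" and vw: "{v, w} \<in> snd (fan n)" and uw: "{u, w} \<in> snd (fan n)"
  obtains i where "1 \<le> i" "i < n" "{u, v, w} = {0, i, i + 1}"
proof -
  have "u = 0 \<or> v = 0 \<or> w = 0"
    using assms unfolding fan_edge_iff by auto
  then consider "u = 0" | "v = 0" | "w = 0" by blast
  then show thesis
  proof cases
    case 1
    with uv uw have "v \<noteq> 0" "w \<noteq> 0" by (auto simp: fan_edge_iff)
    with vw obtain i where "1 \<le> i" "i < n" "{v, w} = {i, i + 1}" by (rule fan_rim_edge)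
    with 1 show thesis by (intro that) simp_all
  next
    case 2
    with uv vw have "u \<noteq> 0" "w \<noteq> 0" by (auto simp: fan_edge_iff)
    with uw obtain i where "1 \<le> i" "i < n" "{u, w} = {i, i + 1}" by (rule fan_rim_edge)
    with 2 show thesis by (intro that) (simp_all add: insert_commute)
  next
    case 3
    with uw vw have "u \<noteq> 0" "v \<noteq> 0" by (auto simp: fan_edge_iff)
    with uv obtain i where "1 \<le> i" "i < n" "{u, v} = {i, i + 1}" by (rule fan_rim_edge)
    with 3 show thesis by (intro that) (simp_all add: insert_commute)
  qed
qed

lemma fan_copies_triangle_in_H_subgraphs:
  assumes "j < m" "1 \<le> i" "i < n"
  shows "triangle (j, 0) (j, i) (j, i + 1) \<in> H_subgraphs (copies m (fan n)) (cycle_graph 3)"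
  using assms
  by (intro triangle_in_H_subgraphs_cycle3 simple_graph_copies simple_graph_fan)
    (auto simp: copies_edge_iff fan_edge_iff)

lemma fan_copies_H_subgraphs_cycle3:
  assumes "G' \<in> H_subgraphs (copies m (fan n)) (cycle_graph 3)"
  obtains j i where "j < m" "1 \<le> i" "i < n" "G' = triangle (j, 0) (j, i) (j, i + 1)"
proof -
  obtain a b c where "a \<noteq> b" "b \<noteq> c" "a \<noteq> c"
    and ab: "{a, b} \<in> snd (copies m (fan n))" and bc: "{b, c} \<in> snd (copies m (fan n))"
    and ac: "{a, c} \<in> snd (copies m (fan n))" and G': "G' = triangle a b c"
    using H_subgraphs_cycle3_triangle[OF simple_graph_copies[OF simple_graph_fan] assms] .
  obtain j u j' v j'' w where abc: "a = (j, u)" "b = (j', v)" "c = (j'', w)"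
    by (cases a, cases b, cases c) blast
  have same_copy: "j' = j" "j'' = j" and "j < m"
    and fan: "{u, v} \<in> snd (fan n)" "{v, w} \<in> snd (fan n)" "{u, w} \<in> snd (fan n)"
    using ab bc ac unfolding abc copies_edge_iff by simp_all
  obtain i where i: "1 \<le> i" "i < n" "{u, v, w} = {0, i, i + 1}"
    using fan by (rule fan_triangle)
  have "{a, b, c} = Pair j ` {u, v, w}"
    by (simp add: abc same_copy)
  also have "\<dots> = {(j, 0), (j, i), (j, i + 1)}"
    by (simp only: i(3) image_insert image_empty)
  finally have "{a, b, c} = {(j, 0), (j, i), (j, i + 1)}" .
  with \<open>a \<noteq> b\<close> \<open>b \<noteq> c\<close> \<open>a \<noteq> c\<close> i(1) have "G' = triangle (j, 0) (j, i) (j, i + 1)"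
    unfolding G' by (intro triangle_eqI) simp_all
  with \<open>j < m\<close> i(1,2) show thesis by (rule that)
qed

section \<open>Labelings of disjoint copies\<close>

lemma Pair_image_eq_iff:
  assumes "e \<noteq> {}"
  shows "Pair j ` e = Pair j' ` e' \<longleftrightarrow> j = j' \<and> e = e'"
proof
  assume eq: "Pair j ` e = Pair j' ` e'"
  from assms obtain x where "x \<in> e" by blast
  then have "(j, x) \<in> Pair j' ` e'" using eq by blast
  moreover have "e = e'"
    using arg_cong[OF eq, of "image snd"] by (simp add: image_image)
  ultimately show "j = j' \<and> e = e'" by blast
qed simp

definition copy_elem :: "nat \<Rightarrow> 'a + 'a set \<Rightarrow> (nat \<times> 'a) + (nat \<times> 'a) set" where
  "copy_elem j = map_sum (Pair j) (image (Pair j))"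

lemma copy_elem_simps [simp]:
  "copy_elem j (Inl v) = Inl (j, v)" "copy_elem j (Inr e) = Inr (Pair j ` e)"
  by (simp_all add: copy_elem_def)

lemma bij_betw_copy_elem:
  assumes "simple_graph G"
  shows "bij_betw (case_prod copy_elem) ({..<m} \<times> (fst G <+> snd G))
           (fst (copies m G) <+> snd (copies m G))"
proof (rule bij_betwI')
  have nonempty: "e \<noteq> {}" if "e \<in> snd G" for e
    using assms that unfolding simple_graph_def by auto
  fix x y assume "x \<in> {..<m} \<times> (fst G <+> snd G)" "y \<in> {..<m} \<times> (fst G <+> snd G)"
  then obtain j a k b where xy: "x = (j, a)" "y = (k, b)" "a \<in> fst G <+> snd G" "b \<in> fst G <+> snd G"
    by blast
  then show "case_prod copy_elem x = case_prod copy_elem y \<longleftrightarrow> x = y"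
    by (cases a; cases b) (auto simp: Pair_image_eq_iff nonempty)
next
  fix x assume "x \<in> {..<m} \<times> (fst G <+> snd G)"
  then obtain j a where x: "x = (j, a)" "j < m" "a \<in> fst G <+> snd G"
    by blast
  then show "case_prod copy_elem x \<in> fst (copies m G) <+> snd (copies m G)"
    by (cases a) (auto simp: fst_copies copies_def)
next
  fix y assume "y \<in> fst (copies m G) <+> snd (copies m G)"
  then consider j v where "j < m" "v \<in> fst G" "y = Inl (j, v)"
    | j e where "j < m" "e \<in> snd G" "y = Inr (Pair j ` e)"
    by (auto simp: fst_copies copies_def)
  then show "\<exists>x\<in>{..<m} \<times> (fst G <+> snd G). y = case_prod copy_elem x"
  proof cases
    case (1 j v) then show ?thesis by (intro bexI[of _ "(j, Inl v)"]) auto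
  next
    case (2 j e) then show ?thesis by (intro bexI[of _ "(j, Inr e)"]) auto
  qed
qed

definition copies_labeling ::
    "nat \<Rightarrow> 'a graph \<Rightarrow> (nat \<Rightarrow> 'a + 'a set \<Rightarrow> nat) \<Rightarrow> (nat \<times> 'a) + (nat \<times> 'a) set \<Rightarrow> nat" where
  "copies_labeling m G \<mu> = case_prod \<mu> \<circ> the_inv_into ({..<m} \<times> (fst G <+> snd G)) (case_prod copy_elem)"

lemma copies_labeling_copy_elem:
  assumes "simple_graph G" "j < m" "x \<in> fst G <+> snd G"
  shows "copies_labeling m G \<mu> (copy_elem j x) = \<mu> j x"
  using the_inv_into_f_f[OF bij_betw_imp_inj_on[OF bij_betw_copy_elem[OF assms(1)]], of "(j, x)"] assms
  by (simp add: copies_labeling_def)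

lemma bij_betw_copies_labeling:
  assumes "simple_graph G" "bij_betw (case_prod \<mu>) ({..<m} \<times> (fst G <+> snd G)) T"
  shows "bij_betw (copies_labeling m G \<mu>) (fst (copies m G) <+> snd (copies m G)) T"
  unfolding copies_labeling_def
  using bij_betw_trans[OF bij_betw_the_inv_into[OF bij_betw_copy_elem[OF assms(1)]] assms(2)] .

lemma bij_betw_mixed_radix: "bij_betw (\<lambda>(r, s). m * s + r + 1 :: nat) ({..<m} \<times> {..<k}) {1..m * k}"
proof (rule bij_betw_byWitness[where f' = "\<lambda>t. ((t - 1) mod m, (t - 1) div m)"])
  show "\<forall>x\<in>{..<m} \<times> {..<k}. (\<lambda>t. ((t - 1) mod m, (t - 1) div m)) ((\<lambda>(r, s). m * s + r + 1) x) = x"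
    by auto
  show "\<forall>t\<in>{1..m * k}. (\<lambda>(r, s). m * s + r + 1) ((t - 1) mod m, (t - 1) div m) = t"
    by (simp add: add.commute)
  have "m * s + r + 1 \<le> m * k" if "r < m" "s < k" for r s
  proof -
    have "m * (s + 1) \<le> m * k" using that(2) by (intro mult_le_mono2) simp
    then show ?thesis using that(1) by (simp add: algebra_simps)
  qed
  then show "(\<lambda>(r, s). m * s + r + 1) ` ({..<m} \<times> {..<k}) \<subseteq> {1..m * k}"
    by auto
  have "(t - 1) mod m < m \<and> (t - 1) div m < k" if "1 \<le> t" "t \<le> m * k" for t
  proof -
    have "0 < m" "t - 1 < k * m" using that by (auto simp: mult.commute intro: Nat.gr0I)
    then show ?thesis by (simp add: less_mult_imp_div_less)
  qed
  then show "(\<lambda>t. ((t - 1) mod m, (t - 1) div m)) ` {1..m * k} \<subseteq> {..<m} \<times> {..<k}"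
    by auto
qed

lemma bij_betw_fibrewise_product:
  assumes "bij_betw g A B" "\<And>x. x \<in> A \<Longrightarrow> bij_betw (f x) C C"
  shows "bij_betw (\<lambda>(j, x). (f x j, g x)) (C \<times> A) (C \<times> B)"
proof (rule bij_betwI')
  fix p q assume "p \<in> C \<times> A" "q \<in> C \<times> A"
  then show "(case p of (j, x) \<Rightarrow> (f x j, g x)) = (case q of (j, x) \<Rightarrow> (f x j, g x)) \<longleftrightarrow> p = q"
    using assms by (auto simp: bij_betw_def inj_on_def)
next
  fix p assume "p \<in> C \<times> A"
  then show "(case p of (j, x) \<Rightarrow> (f x j, g x)) \<in> C \<times> B"
    using assms by (auto simp: bij_betw_def)
next
  fix q assume "q \<in> C \<times> B"
  then obtain r s where q: "q = (r, s)" "r \<in> C" "s \<in> B" by blast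
  then obtain x where x: "x \<in> A" "g x = s"
    using assms(1) by (auto simp: bij_betw_def)
  then obtain j where "j \<in> C" "f x j = r"
    using assms(2) q(2) by (metis bij_betw_iff_bijections)
  with q x show "\<exists>p\<in>C \<times> A. q = (case p of (j, x) \<Rightarrow> (f x j, g x))"
    by force
qed

lemma bij_betw_reflect_lessThan: "bij_betw (\<lambda>j. m - 1 - j) {..<m} {..<(m::nat)}"
  by (rule bij_betw_byWitness[where f' = "\<lambda>j. m - 1 - j"]) auto

section \<open>The labeling of mF_n\<close>

definition fan_slot :: "nat \<Rightarrow> nat + nat set \<Rightarrow> nat" where
  "fan_slot n x = (case x of Inl v \<Rightarrow> v
     | Inr e \<Rightarrow> if 0 \<in> e then 3 * n + 1 - 2 * Max e else n + 2 * Min e)"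

lemma fan_slot_simps:
  "fan_slot n (Inl v) = v"
  "1 \<le> i \<Longrightarrow> fan_slot n (Inr {0, i}) = 3 * n + 1 - 2 * i"
  "1 \<le> i \<Longrightarrow> fan_slot n (Inr {i, Suc i}) = n + 2 * i"
  by (simp_all add: fan_slot_def)

definition fan_unslot :: "nat \<Rightarrow> nat \<Rightarrow> nat + nat set" where
  "fan_unslot n s = (if s \<le> n then Inl s
     else if even (s - n) then Inr {(s - n) div 2, (s - n) div 2 + 1}
     else Inr {0, (3 * n + 1 - s) div 2})"

lemma fan_elements_iff:
  "x \<in> fst (fan n) <+> snd (fan n) \<longleftrightarrow>
     (\<exists>v\<le>n. x = Inl v) \<or> (\<exists>i. 1 \<le> i \<and> i \<le> n \<and> x = Inr {0, i}) \<or>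
     (\<exists>i. 1 \<le> i \<and> i < n \<and> x = Inr {i, i + 1})"
  unfolding snd_fan by (auto simp: fan_def Plus_def)

lemma fan_unslot_fan_slot:
  assumes "1 \<le> n" "x \<in> fst (fan n) <+> snd (fan n)"
  shows "fan_unslot n (fan_slot n x) = x \<and> fan_slot n x < 3 * n"
  using assms(2) unfolding fan_elements_iff
proof (elim disjE exE conjE)
  fix v assume "v \<le> n" "x = Inl v"
  then show ?thesis using assms(1) by (simp add: fan_unslot_def fan_slot_simps)
next
  fix i assume "1 \<le> i" "i \<le> n" "x = Inr {0, i}"
  then show ?thesis using assms(1) by (simp add: fan_unslot_def fan_slot_simps) arith
next
  fix i assume "1 \<le> i" "i < n" "x = Inr {i, i + 1}"
  then show ?thesis by (simp add: fan_unslot_def fan_slot_simps)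
qed

lemma fan_slot_fan_unslot:
  assumes "s < 3 * n"
  shows "fan_slot n (fan_unslot n s) = s \<and> fan_unslot n s \<in> fst (fan n) <+> snd (fan n)"
proof (cases "s \<le> n")
  case True
  then show ?thesis by (auto simp: fan_unslot_def fan_slot_simps fan_elements_iff)
next
  case beyond: False
  show ?thesis
  proof (cases "even (s - n)")
    case True
    then obtain h where h: "s - n = 2 * h" by blast
    with beyond assms have "1 \<le> h" "h < n" by linarith+
    with h True beyond show ?thesis by (auto simp: fan_unslot_def fan_slot_simps fan_elements_iff)
  next
    case False
    then obtain h where h: "s - n = 2 * h + 1" using oddE by blast
    with beyond assms have "3 * n + 1 - s = 2 * (n - h)" "1 \<le> n - h" by linarith+
    with h False beyond show ?thesis by (auto simp: fan_unslot_def fan_slot_simps fan_elements_iff)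
  qed
qed

lemma bij_betw_fan_slot:
  assumes "1 \<le> n"
  shows "bij_betw (fan_slot n) (fst (fan n) <+> snd (fan n)) {..<3 * n}"
  by (rule bij_betw_byWitness[where f' = "fan_unslot n"])
    (use fan_unslot_fan_slot[OF assms] fan_slot_fan_unslot in auto)

definition fan_copy_label :: "nat \<Rightarrow> nat \<Rightarrow> nat \<Rightarrow> nat + nat set \<Rightarrow> nat" where
  "fan_copy_label m n j x = m * fan_slot n x + (case x of Inl _ \<Rightarrow> j | Inr _ \<Rightarrow> m - 1 - j) + 1"

lemma bij_betw_fan_copy_label:
  assumes "1 \<le> n"
  shows "bij_betw (case_prod (fan_copy_label m n))
           ({..<m} \<times> (fst (fan n) <+> snd (fan n))) {1..m * (3 * n)}"
proof -
  let ?flip = "\<lambda>x. case x of Inl _ \<Rightarrow> id | Inr _ \<Rightarrow> (\<lambda>j. m - 1 - j)"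
  have "bij_betw (\<lambda>(j, x). (?flip x j, fan_slot n x))
      ({..<m} \<times> (fst (fan n) <+> snd (fan n))) ({..<m} \<times> {..<3 * n})"
    by (rule bij_betw_fibrewise_product[OF bij_betw_fan_slot[OF assms]])
      (use bij_betw_reflect_lessThan[of m] in \<open>auto split: sum.split\<close>)
  from bij_betw_trans[OF this bij_betw_mixed_radix]
  show ?thesis
    by (rule bij_betw_cong[THEN iffD1, rotated]) (auto simp: fan_copy_label_def split: sum.split)
qed

definition fan_copies_labeling :: "nat \<Rightarrow> nat \<Rightarrow> (nat \<times> nat) + (nat \<times> nat) set \<Rightarrow> nat" where
  "fan_copies_labeling m n = copies_labeling m (fan n) (fan_copy_label m n)"

lemma fan_copies_labeling_simps:
  assumes "j < m"
  shows "v \<le> n \<Longrightarrow> fan_copies_labeling m n (Inl (j, v)) = m * v + j + 1"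
    and "1 \<le> i \<Longrightarrow> i \<le> n \<Longrightarrow>
      fan_copies_labeling m n (Inr {(j, 0), (j, i)}) = m * (3 * n + 1 - 2 * i) + (m - 1 - j) + 1"
    and "1 \<le> i \<Longrightarrow> i < n \<Longrightarrow>
      fan_copies_labeling m n (Inr {(j, i), (j, i + 1)}) = m * (n + 2 * i) + (m - 1 - j) + 1"
proof -
  have label: "fan_copies_labeling m n (copy_elem j x) = fan_copy_label m n j x"
    if "x \<in> fst (fan n) <+> snd (fan n)" for x
    unfolding fan_copies_labeling_def using simple_graph_fan assms that by (rule copies_labeling_copy_elem)
  show "fan_copies_labeling m n (Inl (j, v)) = m * v + j + 1" if "v \<le> n"
  proof -
    have "Inl v \<in> fst (fan n) <+> snd (fan n)" using that by (auto simp: fan_def)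
    from label[OF this] show ?thesis by (simp add: fan_copy_label_def fan_slot_simps)
  qed
  show "fan_copies_labeling m n (Inr {(j, 0), (j, i)}) = m * (3 * n + 1 - 2 * i) + (m - 1 - j) + 1"
    if "1 \<le> i" "i \<le> n"
  proof -
    have "Inr {0, i} \<in> fst (fan n) <+> snd (fan n)" using that by (auto simp: snd_fan)
    from label[OF this] show ?thesis using that(1) by (simp add: fan_copy_label_def fan_slot_simps)
  qed
  show "fan_copies_labeling m n (Inr {(j, i), (j, i + 1)}) = m * (n + 2 * i) + (m - 1 - j) + 1"
    if "1 \<le> i" "i < n"
  proof -
    have "Inr {i, i + 1} \<in> fst (fan n) <+> snd (fan n)" using that by (auto simp: snd_fan)
    from label[OF this] show ?thesis using that(1) by (simp add: fan_copy_label_def fan_slot_simps)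
  qed
qed

lemma triangle_weight:
  fixes lab :: "'a + 'a set \<Rightarrow> nat"
  assumes "a \<noteq> b" "b \<noteq> c" "a \<noteq> c"
  shows "(\<Sum>v\<in>fst (triangle a b c). lab (Inl v)) + (\<Sum>e\<in>snd (triangle a b c). lab (Inr e)) =
    lab (Inl a) + lab (Inl b) + lab (Inl c) + lab (Inr {a, b}) + lab (Inr {b, c}) + lab (Inr {a, c})"
  using assms by (simp add: triangle_def doubleton_eq_iff)

lemma fan_copies_triangle_weight:
  assumes "j < m" "1 \<le> i" "i < n"
  shows "(\<Sum>v\<in>fst (triangle (j, 0) (j, i) (j, i + 1)). fan_copies_labeling m n (Inl v)) +
      (\<Sum>e\<in>snd (triangle (j, 0) (j, i) (j, i + 1)). fan_copies_labeling m n (Inr e)) = m * (7 * n + 4) + 3"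
proof -
  define k where "k = n - i - 1"
  define p where "p = m - 1 - j"
  have n: "n = i + 1 + k" and m: "m = j + 1 + p"
    using assms unfolding k_def p_def by simp_all
  note label = fan_copies_labeling_simps[OF assms(1)]
  have "(\<Sum>v\<in>fst (triangle (j, 0) (j, i) (j, i + 1)). fan_copies_labeling m n (Inl v)) +
      (\<Sum>e\<in>snd (triangle (j, 0) (j, i) (j, i + 1)). fan_copies_labeling m n (Inr e)) =
      (j + 1) + (m * i + j + 1) + (m * (i + 1) + j + 1) +
      (m * (3 * n + 1 - 2 * i) + p + 1) + (m * (n + 2 * i) + p + 1) +
      (m * (3 * n + 1 - 2 * (i + 1)) + p + 1)"
    using assms by (subst triangle_weight) (simp_all add: label[simplified] p_def)
  also have "\<dots> = m * (7 * n + 4) + 3"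
  proof -
    have "3 * n + 1 - 2 * i = i + 3 * k + 4" "3 * n + 1 - 2 * (i + 1) = i + 3 * k + 2" "n + 2 * i = 3 * i + k + 1"
      by (simp_all add: n)
    then show ?thesis by (simp add: n algebra_simps) (simp add: m algebra_simps)
  qed
  finally show ?thesis .
qed

lemma fan_copies_covering_cycle3:
  assumes "2 \<le> n"
  shows "H_covering (copies m (fan n)) (cycle_graph 3)"
  unfolding H_covering_def
proof
  fix e assume "e \<in> snd (copies m (fan n))"
  then obtain j e0 where j: "j < m" and e0: "e0 \<in> snd (fan n)" and e: "e = Pair j ` e0"
    by (auto simp: copies_def)
  from e0 consider (spoke) i where "1 \<le> i" "i \<le> n" "e0 = {0, i}"
    | (rim) i where "1 \<le> i" "i < n" "e0 = {i, i + 1}"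
    unfolding snd_fan by blast
  then obtain i where i: "1 \<le> i" "i < n" and "e0 \<in> snd (triangle 0 i (i + 1))"
  proof cases
    case (spoke i)
    show thesis
    proof (cases "i < n")
      case True
      with spoke show thesis by (intro that[of i]) (auto simp: triangle_def)
    next
      case False
      with spoke assms show thesis by (intro that[of "i - 1"]) (auto simp: triangle_def)
    qed
  next
    case (rim i)
    then show thesis by (intro that[of i]) (auto simp: triangle_def)
  qed
  then have "e \<in> snd (triangle (j, 0) (j, i) (j, i + 1))"
    unfolding e by (auto simp: triangle_def)
  with fan_copies_triangle_in_H_subgraphs[OF j i]
  show "\<exists>G'\<in>H_subgraphs (copies m (fan n)) (cycle_graph 3). e \<in> snd G'" by blast
qed

lemma fan_copies_vertex_labels:
  "(\<lambda>v. fan_copies_labeling m n (Inl v)) ` fst (copies m (fan n)) = {1..m * (n + 1)}"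
proof -
  have V: "fst (copies m (fan n)) = {..<m} \<times> {..<n + 1}"
    by (auto simp: fst_copies fan_def)
  have "(\<lambda>v. fan_copies_labeling m n (Inl v)) ` fst (copies m (fan n)) =
      (\<lambda>(r, s). m * s + r + 1) ` ({..<m} \<times> {..<n + 1})"
    unfolding V by (rule image_cong) (auto simp: fan_copies_labeling_simps)
  also have "\<dots> = {1..m * (n + 1)}"
    using bij_betw_mixed_radix by (rule bij_betw_imp_surj_on)
  finally show ?thesis .
qed

theorem theorem2:
  fixes m n :: nat
  assumes "m \<ge> 2" and "n \<ge> 3"
  shows "H_supermagic (copies m (fan n)) (cycle_graph 3)"
proof -
  let ?G = "copies m (fan n)" and ?lab = "fan_copies_labeling m n"
  have bij: "bij_betw ?lab (fst ?G <+> snd ?G) {1..m * (3 * n)}"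
    unfolding fan_copies_labeling_def
    using simple_graph_fan bij_betw_fan_copy_label by (rule bij_betw_copies_labeling) (use assms in simp)
  then have "finite (fst ?G)" "finite (snd ?G)"
    using bij_betw_finite[OF bij] by simp_all
  with bij have card: "card (fst ?G) + card (snd ?G) = m * (3 * n)"
    by (simp add: bij_betw_same_card card_Plus[symmetric])
  have card_V: "card (fst ?G) = m * (n + 1)"
    by (simp add: fst_copies fan_def card_cartesian_product)
  have magic: "\<forall>G'\<in>H_subgraphs ?G (cycle_graph 3).
      (\<Sum>v\<in>fst G'. ?lab (Inl v)) + (\<Sum>e\<in>snd G'. ?lab (Inr e)) = m * (7 * n + 4) + 3"
    by (metis fan_copies_H_subgraphs_cycle3 fan_copies_triangle_weight)
  have "H_supermagic_labeling ?G (cycle_graph 3) ?lab"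
    unfolding H_supermagic_labeling_def H_magic_labeling_def Plus_def[symmetric] card
    unfolding card_V
    using bij magic fan_copies_vertex_labels by blast
  moreover have "H_covering ?G (cycle_graph 3)"
    using assms(2) by (intro fan_copies_covering_cycle3) simp
  ultimately show ?thesis
    unfolding H_supermagic_def by blast
qed

end
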